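(* Let $K$ be a product formula field and $f\in K[z]$ a polynomial of degree $d\ge3$ with a finite superattracting fixed point $p_0$ (so $f(p_0)=p_0$, $f'(p_0)=0$) and a nonarchimedean place $v$ of bad reduction. Let $r>0$ be the radius of the largest disk about $p_0$ contained in $\mathcal K_v$. Then there is a sequence of Berkovich disks $\mathcal B_i\subseteq\mathcal K_v$ and real numbers $r_i>r$ such that $\delta_v(z,p_0)=r_i$ for all $z\in\mathcal B_i$, and $r_i\to r$ as $i\to\infty$.
   Context: $\mathbf A^1_v$ is the Berkovich affine line over $\mathbb C_v$ (completion of an algebraic closure of $K_v$). $\mathcal K_v=\bigcup_{M>0}\{x\in\mathbf A^1_v:[f^n]_x\le M\ \forall n\ge0\}$ is the Berkovich $v$-adic filled Julia set. $v$ is a place of bad reduction for $f$ if $\mathcal K_v$ is not a Berkovich disk (equivalently, the $v$-adic Julia set is not a Type II point). $\delta_v(x,y)$ is the Hsia kernel relative to $\infty$ on $\mathbf A^1_v$ (extending $|x-y|_v$ on $\mathbb C_v$). *)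

theory Defs
  imports Complex_Main "HOL-Computational_Algebra.Polynomial"
begin

definition abs_value :: "('a::field \<Rightarrow> real) \<Rightarrow> bool" where
  "abs_value a \<longleftrightarrow> (\<forall>x. 0 \<le> a x) \<and> (\<forall>x. a x = 0 \<longleftrightarrow> x = 0)
     \<and> (\<forall>x y. a (x * y) = a x * a y) \<and> (\<forall>x y. a (x + y) \<le> a x + a y)"

definition nonarch :: "('a::field \<Rightarrow> real) \<Rightarrow> bool" where
  "nonarch a \<longleftrightarrow> (\<forall>x y. a (x + y) \<le> max (a x) (a y))"

definition product_formula_field ::
  "'i set \<Rightarrow> ('i \<Rightarrow> 'a::field \<Rightarrow> real) \<Rightarrow> ('i \<Rightarrow> real) \<Rightarrow> bool" where
  "product_formula_field M absv nv \<longleftrightarrow>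
     (\<forall>i\<in>M. abs_value (absv i) \<and> nv i > 0 \<and> (\<exists>x. x \<noteq> 0 \<and> absv i x \<noteq> 1)) \<and>
     (\<forall>x. x \<noteq> 0 \<longrightarrow> finite {i\<in>M. absv i x \<noteq> 1} \<and>
        (\<Prod>i\<in>{i\<in>M. absv i x \<noteq> 1}. absv i x powr nv i) = 1)"

text \<open>(L, absL, iota) is (isometrically isomorphic to) C_v: an algebraically closed complete
  valued field extending (K, absK) in which the algebraic closure of K is dense.\<close>
definition is_Cv :: "('a::field \<Rightarrow> real) \<Rightarrow> ('b::field \<Rightarrow> real) \<Rightarrow> ('a \<Rightarrow> 'b) \<Rightarrow> bool" where
  "is_Cv absK absL \<iota> \<longleftrightarrow>
     abs_value absL \<and>
     \<iota> 0 = 0 \<and> \<iota> 1 = 1 \<and> (\<forall>x y. \<iota> (x + y) = \<iota> x + \<iota> y) \<and> (\<forall>x y. \<iota> (x * y) = \<iota> x * \<iota> y) \<and>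
     (\<forall>x. absL (\<iota> x) = absK x) \<and>
     (\<forall>p::'b poly. degree p > 0 \<longrightarrow> (\<exists>z. poly p z = 0)) \<and>
     (\<forall>X::nat \<Rightarrow> 'b. (\<forall>e>0. \<exists>N. \<forall>m\<ge>N. \<forall>n\<ge>N. absL (X m - X n) < e) \<longrightarrow>
          (\<exists>l. \<forall>e>0. \<exists>N. \<forall>n\<ge>N. absL (X n - l) < e)) \<and>
     (\<forall>z e. e > 0 \<longrightarrow> (\<exists>w p. p \<noteq> 0 \<and> poly (map_poly \<iota> p) w = 0 \<and> absL (z - w) < e))"

definition berk_point :: "('b::field \<Rightarrow> real) \<Rightarrow> ('b poly \<Rightarrow> real) \<Rightarrow> bool" where
  "berk_point absL x \<longleftrightarrow> (\<forall>p. 0 \<le> x p) \<and> (\<forall>p q. x (p * q) = x p * x q)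
     \<and> (\<forall>p q. x (p + q) \<le> x p + x q) \<and> (\<forall>c. x [:c:] = absL c)"

definition berk_line :: "('b::field \<Rightarrow> real) \<Rightarrow> ('b poly \<Rightarrow> real) set" where
  "berk_line absL = {x. berk_point absL x}"

definition classical_pt :: "('b::field \<Rightarrow> real) \<Rightarrow> 'b \<Rightarrow> ('b poly \<Rightarrow> real)" where
  "classical_pt absL a = (\<lambda>p. absL (poly p a))"

definition berk_disk :: "('b::field \<Rightarrow> real) \<Rightarrow> 'b \<Rightarrow> real \<Rightarrow> ('b poly \<Rightarrow> real) set" where
  "berk_disk absL a s = {x \<in> berk_line absL. x [:-a, 1:] \<le> s}"

definition is_berk_disk :: "('b::field \<Rightarrow> real) \<Rightarrow> ('b poly \<Rightarrow> real) set \<Rightarrow> bool" where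
  "is_berk_disk absL B \<longleftrightarrow> (\<exists>a s. s > 0 \<and> B = berk_disk absL a s)"

definition poly_iter :: "'b::comm_ring_1 poly \<Rightarrow> nat \<Rightarrow> 'b poly" where
  "poly_iter g n = ((\<lambda>p. pcompose g p) ^^ n) [:0, 1:]"

definition filled_julia :: "('b::field \<Rightarrow> real) \<Rightarrow> 'b poly \<Rightarrow> ('b poly \<Rightarrow> real) set" where
  "filled_julia absL g = {x \<in> berk_line absL. \<exists>M>0. \<forall>n. x (poly_iter g n) \<le> M}"

definition hsia :: "('b::field \<Rightarrow> real) \<Rightarrow> ('b poly \<Rightarrow> real) \<Rightarrow> ('b poly \<Rightarrow> real) \<Rightarrow> real" where
  "hsia absL x y = Inf {s. \<exists>a. x [:-a, 1:] \<le> s \<and> y [:-a, 1:] \<le> s}"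

end

theory Submission
  imports Defs
begin

text \<open>Write \<open>\<zeta>(c, s)\<close> for the Gauss point of the disk \<open>D(c, s)\<close> and
  \<open>\<phi>(s) = |g - c|\<^sub>\<zeta>\<^sub>(\<^sub>c\<^sub>,\<^sub>s\<^sub>)\<close>, so that \<open>g\<close> maps \<open>\<zeta>(c, s)\<close> to \<open>\<zeta>(c, \<phi>(s))\<close>.
  Since \<open>c\<close> is a superattracting fixed point, \<open>\<phi>(s) / s\<close> is strictly increasing, so \<open>\<phi>\<close> has a
  unique positive fixed point \<open>r\<close>: points within distance \<open>r\<close> of \<open>c\<close> stay there, points farther
  away along the spine escape, and \<open>D(c, r)\<close> is the largest disk about \<open>c\<close> in \<open>\<K>\<^sub>v\<close>.
  Bad reduction means \<open>\<K>\<^sub>v \<noteq> D(c, r)\<close>, which forces a preimage \<open>\<alpha>\<close> of \<open>c\<close> beyond \<open>r\<close>.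
  Choosing the nearest one, there are no roots of \<open>g - c\<close> at distances between \<open>r\<close> and \<open>|\<alpha> - c|\<close>,
  and a Newton polygon argument produces successive preimages \<open>a\<^sub>n\<close> of \<open>\<alpha>\<close> whose distances
  \<open>\<rho>\<^sub>n\<close> to \<open>c\<close> satisfy \<open>\<phi>(\<rho>\<^sub>n\<^sub>+\<^sub>1) = \<rho>\<^sub>n\<close>, hence decrease to \<open>r\<close>. A small disk about
  \<open>a\<^sub>n\<close> is mapped into \<open>D(c, r)\<close> by \<open>g\<^sup>n\<^sup>+\<^sup>1\<close>, so it lies in \<open>\<K>\<^sub>v\<close>, and all its points are at
  Hsia distance \<open>\<rho>\<^sub>n\<close> from \<open>c\<close>.\<close>

section \<open>Nonarchimedean multiplicative seminorms\<close>

lemma linear_lt_power: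
  fixes q :: real
  assumes "q > 1"
  obtains n :: nat where "real n + 1 < q ^ n"
proof -
  have q: "norm (1 / q) < 1" using assms by simp
  have "(\<lambda>n. real n * (1 / q) ^ n + (1 / q) ^ n) \<longlonglongrightarrow> 0 + 0"
    by (intro tendsto_add powser_times_n_limit_0 LIMSEQ_power_zero) (use q in auto)
  then have "eventually (\<lambda>n. real n * (1 / q) ^ n + (1 / q) ^ n < 1) sequentially"
    by (intro order_tendstoD(2)) auto
  then obtain n where "real n * (1 / q) ^ n + (1 / q) ^ n < 1"
    by (auto simp: eventually_sequentially)
  then have "(real n + 1) / q ^ n < 1" by (simp add: power_one_over add_divide_distrib)
  then show ?thesis using that assms by (simp add: field_simps)
qed

lemma ultrametric_if_integers_bounded:
  fixes N :: "'r::comm_ring_1 \<Rightarrow> real"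
  assumes nonneg: "\<And>a. 0 \<le> N a" and zero: "N 0 = 0" and mult: "\<And>a b. N (a * b) = N a * N b"
    and triangle: "\<And>a b. N (a + b) \<le> N a + N b" and of_nat: "\<And>m. N (of_nat m) \<le> 1"
  shows "N (a + b) \<le> max (N a) (N b)"
proof (rule ccontr)
  assume gt: "\<not> ?thesis"
  define M where "M = max (N a) (N b)"
  have M: "0 \<le> M" "N a \<le> M" "N b \<le> M" using nonneg by (auto simp: M_def le_max_iff_disj)
  have power_le: "N (x ^ k) \<le> N x ^ k" for x k
    by (induction k) (use of_nat[of 1] nonneg in \<open>simp_all add: mult mult_left_mono\<close>)
  have power_eq: "N (x ^ Suc k) = N x ^ Suc k" for x k
    by (induction k) (simp_all add: mult)
  have sum_le: "N (sum f I) \<le> (\<Sum>i\<in>I. N (f i))" for f :: "nat \<Rightarrow> 'r" and I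
  proof (induction I rule: infinite_finite_induct)
    case (insert x F)
    then show ?case using triangle[of "f x" "sum f F"] by simp
  qed (simp_all add: zero)
  have term_le: "N (of_nat (n choose k) * a ^ k * b ^ (n - k)) \<le> M ^ n" if "k \<le> n" for n k
  proof -
    have "N (of_nat (n choose k) * a ^ k * b ^ (n - k)) \<le> 1 * M ^ k * M ^ (n - k)"
      unfolding mult
      by (intro mult_mono of_nat order_trans[OF power_le] power_mono)
         (use M nonneg in \<open>simp_all add: mult\<close>)
    also have "\<dots> = M ^ n" using that by (simp add: power_add[symmetric])
    finally show ?thesis .
  qed
  text \<open>The binomial expansion has \<open>n + 1\<close> terms of size at most \<open>M ^ n\<close>, and a polynomial
    bound on the powers of \<open>N (a + b) / M\<close> forces \<open>N (a + b) \<le> M\<close>.\<close>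
  have binomial_bound: "N (a + b) ^ Suc n \<le> (real (Suc n) + 1) * M ^ Suc n" for n
  proof -
    have "N (a + b) ^ Suc n = N (\<Sum>k\<le>Suc n. of_nat (Suc n choose k) * a ^ k * b ^ (Suc n - k))"
      by (simp only: power_eq[symmetric] binomial_ring)
    also have "\<dots> \<le> (\<Sum>k\<le>Suc n. M ^ Suc n)"
      by (rule order_trans[OF sum_le sum_mono]) (use term_le[of _ "Suc n"] in simp)
    finally show ?thesis by simp
  qed
  show False
  proof (cases "M = 0")
    case True
    then show ?thesis using binomial_bound[of 0] gt nonneg[of "a + b"] by (simp add: M_def)
  next
    case False
    then have "N (a + b) / M > 1" using gt M by (simp add: M_def[symmetric] field_simps)
    then obtain n where n: "real n + 1 < (N (a + b) / M) ^ n" by (rule linear_lt_power)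
    then obtain m where m: "n = Suc m" by (cases n) auto
    have "(N (a + b) / M) ^ n \<le> real n + 1"
      using binomial_bound[of m] False M by (simp add: m power_divide field_simps)
    then show ?thesis using n by simp
  qed
qed

locale na_mult_seminorm =
  fixes N :: "'r::comm_ring_1 \<Rightarrow> real"
  assumes nonneg: "0 \<le> N a" and zero [simp]: "N 0 = 0" and one [simp]: "N 1 = 1"
    and mult: "N (a * b) = N a * N b" and add_le_max: "N (a + b) \<le> max (N a) (N b)"
begin

lemma minus [simp]: "N (- a) = N a"
proof -
  have "(N (- 1) - 1) * (N (- 1) + 1) = 0"
    using mult[of "- 1" "- 1"] by (simp add: algebra_simps)
  then have "N (- 1) = 1" using nonneg[of "- 1"] by simp
  then show ?thesis using mult[of "- 1" a] by simp
qed

lemma diff_le_max: "N (a - b) \<le> max (N a) (N b)"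
  using add_le_max[of a "- b"] by simp

lemma add_eq_left: assumes "N b < N a" shows "N (a + b) = N a"
proof -
  have "N a \<le> max (N (a + b)) (N b)" using diff_le_max[of "a + b" b] by simp
  then have "N a \<le> N (a + b)" using assms by (auto simp: max_def split: if_splits)
  moreover have "N (a + b) \<le> N a" using add_le_max[of a b] assms by simp
  ultimately show ?thesis by simp
qed

lemma add_eq_max: assumes "N a \<noteq> N b" shows "N (a + b) = max (N a) (N b)"
  using add_eq_left[of a b] add_eq_left[of b a] assms
  by (cases "N a < N b") (auto simp: add.commute max_def)

lemma sum_le: assumes "\<And>i. i \<in> I \<Longrightarrow> N (f i) \<le> B" "0 \<le> B" shows "N (sum f I) \<le> B"
  using assms
proof (induction I rule: infinite_finite_induct)
  case (insert x F)
  then show ?case using add_le_max[of "f x" "sum f F"] by (force simp: le_max_iff_disj)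
qed simp_all

lemma sum_less: assumes "\<And>i. i \<in> I \<Longrightarrow> N (f i) < B" "0 < B" shows "N (sum f I) < B"
  using assms
proof (induction I rule: infinite_finite_induct)
  case (insert x F)
  then show ?case using add_le_max[of "f x" "sum f F"] by force
qed simp_all

lemma power: "N (a ^ k) = N a ^ k"
  by (induction k) (simp_all add: mult)

lemma prod_mset: "N (\<Prod>z\<in>#R. f z) = (\<Prod>z\<in>#R. N (f z))"
  by (induction R) (simp_all add: mult)

lemma of_nat_le_one: "N (of_nat m) \<le> 1"
proof (induction m)
  case (Suc m)
  then show ?case using add_le_max[of 1 "of_nat m"] by simp
qed simp

end

locale na_abs = na_mult_seminorm A for A :: "'b::field \<Rightarrow> real" +
  assumes eq_0D: "A x = 0 \<Longrightarrow> x = 0"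
begin

lemma eq_0_iff [simp]: "A x = 0 \<longleftrightarrow> x = 0"
  using eq_0D by auto

lemma pos: "x \<noteq> 0 \<Longrightarrow> 0 < A x"
  using nonneg[of x] by (simp add: order_less_le)

lemma minus_commute: "A (x - y) = A (y - x)"
  using minus[of "x - y"] by simp

end

section \<open>Gauss norms\<close>

fun weighted_max :: "(nat \<Rightarrow> real) \<Rightarrow> real \<Rightarrow> nat \<Rightarrow> real" where
  "weighted_max B s 0 = B 0"
| "weighted_max B s (Suc n) = max (weighted_max B s n) (B (Suc n) * s ^ Suc n)"

lemma weighted_max_ge: "k \<le> n \<Longrightarrow> B k * s ^ k \<le> weighted_max B s n"
  by (induction n) (auto simp: le_Suc_eq le_max_iff_disj)

lemma weighted_max_attained: "\<exists>k\<le>n. weighted_max B s n = B k * s ^ k"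
  by (induction n) (auto simp: max_def intro: le_SucI)

lemma continuous_on_weighted_max: "continuous_on S (\<lambda>s. weighted_max B s n)"
  by (induction n) (auto intro!: continuous_intros)

definition gauss_norm :: "('b::field \<Rightarrow> real) \<Rightarrow> real \<Rightarrow> 'b poly \<Rightarrow> real" where
  "gauss_norm A s p = weighted_max (\<lambda>k. A (coeff p k)) s (degree p)"

text \<open>The point \<open>\<zeta>(c, s)\<close> of the Berkovich line: the sup norm on the disk \<open>D(c, s)\<close>,
  or the classical point \<open>c\<close> when \<open>s = 0\<close>.\<close>
definition disk_norm :: "('b::field \<Rightarrow> real) \<Rightarrow> 'b \<Rightarrow> real \<Rightarrow> 'b poly \<Rightarrow> real" where
  "disk_norm A c s p = gauss_norm A s (pcompose p [:c, 1:])"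

context na_abs
begin

lemma gauss_norm_ge: assumes "0 \<le> s" shows "A (coeff p k) * s ^ k \<le> gauss_norm A s p"
proof (cases "k \<le> degree p")
  case True
  then show ?thesis
    using weighted_max_ge[of k "degree p" "\<lambda>k. A (coeff p k)" s] by (simp add: gauss_norm_def)
next
  case False
  then have "coeff p k = 0" by (simp add: coeff_eq_0)
  moreover have "A (coeff p 0) * s ^ 0 \<le> gauss_norm A s p"
    using weighted_max_ge[of 0 "degree p" "\<lambda>k. A (coeff p k)" s] by (simp add: gauss_norm_def)
  ultimately show ?thesis using nonneg[of "coeff p 0"] by simp
qed

lemma gauss_norm_attained: "\<exists>k. gauss_norm A s p = A (coeff p k) * s ^ k"
  using weighted_max_attained by (metis gauss_norm_def)

lemma gauss_norm_le: "(\<And>k. A (coeff p k) * s ^ k \<le> B) \<Longrightarrow> gauss_norm A s p \<le> B"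
  using gauss_norm_attained[of s p] by metis

lemma gauss_norm_nonneg: "0 \<le> s \<Longrightarrow> 0 \<le> gauss_norm A s p"
  using gauss_norm_ge[of s p 0] nonneg[of "coeff p 0"] by simp

lemma gauss_norm_0 [simp]: "gauss_norm A s 0 = 0"
  by (simp add: gauss_norm_def)

lemma gauss_norm_const [simp]: "gauss_norm A s [:a:] = A a"
  by (simp add: gauss_norm_def)

lemma gauss_norm_linear: "gauss_norm A s [:b, 1:] = max (A b) s"
  by (simp add: gauss_norm_def)

lemma gauss_norm_pos: assumes "0 < s" "p \<noteq> 0" shows "0 < gauss_norm A s p"
proof -
  have "0 < A (lead_coeff p) * s ^ degree p" using assms pos by simp
  then show ?thesis using gauss_norm_ge[of s p "degree p"] assms by linarith
qed

lemma gauss_norm_at_0: "gauss_norm A 0 p = A (coeff p 0)"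
proof (rule antisym)
  show "gauss_norm A 0 p \<le> A (coeff p 0)"
  proof (rule gauss_norm_le)
    fix k
    show "A (coeff p k) * 0 ^ k \<le> A (coeff p 0)" by (cases k) (simp_all add: nonneg)
  qed
  show "A (coeff p 0) \<le> gauss_norm A 0 p" using gauss_norm_ge[of 0 p 0] by simp
qed

lemma gauss_norm_mono: assumes "0 \<le> s" "s \<le> t" shows "gauss_norm A s p \<le> gauss_norm A t p"
proof (rule gauss_norm_le)
  fix k
  have "A (coeff p k) * s ^ k \<le> A (coeff p k) * t ^ k"
    using assms nonneg by (intro mult_left_mono power_mono) auto
  then show "A (coeff p k) * s ^ k \<le> gauss_norm A t p" using gauss_norm_ge[of t p k] assms by linarith
qed

lemma gauss_norm_add:
  assumes "0 \<le> s" shows "gauss_norm A s (p + q) \<le> max (gauss_norm A s p) (gauss_norm A s q)"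
proof (rule gauss_norm_le)
  fix k
  have "A (coeff (p + q) k) \<le> A (coeff p k) \<or> A (coeff (p + q) k) \<le> A (coeff q k)"
    using add_le_max[of "coeff p k" "coeff q k"] by (auto simp: le_max_iff_disj)
  then have "A (coeff (p + q) k) * s ^ k \<le> A (coeff p k) * s ^ k
      \<or> A (coeff (p + q) k) * s ^ k \<le> A (coeff q k) * s ^ k"
    using assms by (auto intro: mult_right_mono)
  then show "A (coeff (p + q) k) * s ^ k \<le> max (gauss_norm A s p) (gauss_norm A s q)"
    using gauss_norm_ge[OF assms, of p k] gauss_norm_ge[OF assms, of q k]
    by (auto simp: le_max_iff_disj)
qed

lemma gauss_norm_plus_const:
  assumes "0 \<le> s" "coeff u 0 = 0"
  shows "gauss_norm A s (u + [:b:]) = max (A b) (gauss_norm A s u)"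
proof (rule antisym)
  show "gauss_norm A s (u + [:b:]) \<le> max (A b) (gauss_norm A s u)"
  proof (rule gauss_norm_le)
    fix k
    show "A (coeff (u + [:b:]) k) * s ^ k \<le> max (A b) (gauss_norm A s u)"
      using assms gauss_norm_ge[of s u k] by (cases k) (auto simp: le_max_iff_disj)
  qed
  have "A b \<le> gauss_norm A s (u + [:b:])" using gauss_norm_ge[of s "u + [:b:]" 0] assms by simp
  moreover have "gauss_norm A s u \<le> gauss_norm A s (u + [:b:])"
  proof -
    obtain k where k: "gauss_norm A s u = A (coeff u k) * s ^ k" using gauss_norm_attained by blast
    then show ?thesis
      using assms gauss_norm_ge[of s "u + [:b:]" k] gauss_norm_nonneg by (cases k) simp_all
  qed
  ultimately show "max (A b) (gauss_norm A s u) \<le> gauss_norm A s (u + [:b:])" by simp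
qed

lemma gauss_norm_le_radius:
  assumes "0 \<le> t" "t \<le> 1" "coeff u 0 = 0" shows "gauss_norm A t u \<le> t * gauss_norm A 1 u"
proof (rule gauss_norm_le)
  fix k
  show "A (coeff u k) * t ^ k \<le> t * gauss_norm A 1 u"
  proof (cases k)
    case 0
    then show ?thesis using assms gauss_norm_nonneg[of 1 u] by simp
  next
    case (Suc m)
    then have "A (coeff u k) * t ^ k \<le> A (coeff u k) * t"
      using assms nonneg by (intro mult_left_mono) (simp_all add: power_le_one mult_left_le)
    also have "\<dots> \<le> gauss_norm A 1 u * t"
      using gauss_norm_ge[of 1 u k] assms by (simp add: mult_right_mono)
    finally show ?thesis by (simp add: mult.commute)
  qed
qed

lemma gauss_norm_mult_le:
  assumes "0 < s" shows "gauss_norm A s (p * q) \<le> gauss_norm A s p * gauss_norm A s q"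
proof (rule gauss_norm_le)
  fix n
  have "A (coeff p i * coeff q (n - i)) * s ^ n \<le> gauss_norm A s p * gauss_norm A s q"
    if "i \<le> n" for i
  proof -
    have "s ^ n = s ^ i * s ^ (n - i)" using that by (simp add: power_add[symmetric])
    then have "A (coeff p i * coeff q (n - i)) * s ^ n
        = (A (coeff p i) * s ^ i) * (A (coeff q (n - i)) * s ^ (n - i))"
      by (simp add: mult mult_ac)
    also have "\<dots> \<le> gauss_norm A s p * gauss_norm A s q"
      using gauss_norm_ge[of s p i] gauss_norm_ge[of s q "n - i"] assms nonneg gauss_norm_nonneg[of s p]
      by (intro mult_mono) auto
    finally show ?thesis .
  qed
  then have "A (coeff (p * q) n) \<le> gauss_norm A s p * gauss_norm A s q / s ^ n"
    unfolding coeff_mult using assms gauss_norm_nonneg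
    by (intro sum_le) (auto simp: field_simps)
  then show "A (coeff (p * q) n) * s ^ n \<le> gauss_norm A s p * gauss_norm A s q"
    using assms by (simp add: field_simps)
qed

lemma gauss_norm_last_max:
  assumes "0 < s" "p \<noteq> 0"
  obtains i where "A (coeff p i) * s ^ i = gauss_norm A s p"
    and "\<And>k. i < k \<Longrightarrow> A (coeff p k) * s ^ k < gauss_norm A s p"
proof -
  define I where "I = {i. A (coeff p i) * s ^ i = gauss_norm A s p}"
  have "I \<subseteq> {..degree p}"
    using gauss_norm_pos[OF assms] by (auto simp: I_def intro: le_degree)
  then have fin: "finite I" by (rule finite_subset) simp
  have "I \<noteq> {}" using gauss_norm_attained[of s p] by (auto simp: I_def)
  then have "Max I \<in> I" using fin by simp
  moreover have "A (coeff p k) * s ^ k < gauss_norm A s p" if "Max I < k" for k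
  proof -
    have "k \<notin> I" using Max_ge[OF fin] that by fastforce
    then show ?thesis using gauss_norm_ge[of s p k] assms by (auto simp: I_def)
  qed
  ultimately show ?thesis using that by (auto simp: I_def)
qed

lemma gauss_norm_mult_ge:
  assumes s: "0 < s" and "p \<noteq> 0" "q \<noteq> 0"
  shows "gauss_norm A s p * gauss_norm A s q \<le> gauss_norm A s (p * q)"
proof -
  define gp gq where "gp = gauss_norm A s p" and "gq = gauss_norm A s q"
  have gp: "0 < gp" and gq: "0 < gq" using gauss_norm_pos s assms by (simp_all add: gp_def gq_def)
  obtain i where i: "A (coeff p i) * s ^ i = gp" "\<And>k. i < k \<Longrightarrow> A (coeff p k) * s ^ k < gp"
    using gauss_norm_last_max[OF s \<open>p \<noteq> 0\<close>] gp_def by metis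
  obtain j where j: "A (coeff q j) * s ^ j = gq" "\<And>k. j < k \<Longrightarrow> A (coeff q k) * s ^ k < gq"
    using gauss_norm_last_max[OF s \<open>q \<noteq> 0\<close>] gq_def by metis
  text \<open>In the \<open>(i + j)\<close>-th coefficient of \<open>p * q\<close> the term \<open>k = i\<close> strictly dominates the others.\<close>
  define n where "n = i + j"
  have term_eq: "A (coeff p k * coeff q (n - k)) * s ^ n
      = (A (coeff p k) * s ^ k) * (A (coeff q (n - k)) * s ^ (n - k))" if "k \<le> n" for k
  proof -
    have "s ^ n = s ^ k * s ^ (n - k)" using that by (simp add: power_add[symmetric])
    then show ?thesis by (simp add: mult mult_ac)
  qed
  have main: "A (coeff p i * coeff q (n - i)) * s ^ n = gp * gq"
    using term_eq[of i] i j by (simp add: n_def)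
  have rest: "A (coeff p k * coeff q (n - k)) * s ^ n < gp * gq" if "k \<in> {..n} - {i}" for k
  proof -
    have k: "k \<le> n" "k \<noteq> i" using that by auto
    define x y where "x = A (coeff p k) * s ^ k" and "y = A (coeff q (n - k)) * s ^ (n - k)"
    have "0 \<le> x" "x \<le> gp" "0 \<le> y" "y \<le> gq"
      using gauss_norm_ge[of s p k] gauss_norm_ge[of s q "n - k"] s nonneg
      by (auto simp: gp_def gq_def x_def y_def)
    moreover have "i < k \<or> j < n - k" using k by (auto simp: n_def)
    then have "x < gp \<or> y < gq" using i(2)[of k] j(2)[of "n - k"] by (auto simp: x_def y_def)
    ultimately have "x * y < gp * gq"
      using gp gq by (metis mult_le_less_imp_less mult_less_le_imp_less mult_mono
          mult_strict_left_mono mult_strict_right_mono order_le_less_trans order_less_le)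
    then show ?thesis using term_eq[OF k(1)] by (simp add: x_def y_def)
  qed
  have "A (\<Sum>k\<in>{..n} - {i}. coeff p k * coeff q (n - k)) < gp * gq / s ^ n"
    using rest gp gq s by (intro sum_less) (auto simp: field_simps)
  moreover have "coeff (p * q) n
      = coeff p i * coeff q (n - i) + (\<Sum>k\<in>{..n} - {i}. coeff p k * coeff q (n - k))"
    unfolding coeff_mult by (subst sum.remove[of _ i]) (auto simp: n_def)
  moreover have "A (coeff p i * coeff q (n - i)) = gp * gq / s ^ n"
    using main s by (simp add: field_simps)
  ultimately have "A (coeff (p * q) n) = gp * gq / s ^ n"
    using add_eq_left by metis
  then show ?thesis using gauss_norm_ge[of s "p * q" n] s by (simp add: gp_def gq_def field_simps)
qed

lemma gauss_norm_mult:
  assumes "0 \<le> s" shows "gauss_norm A s (p * q) = gauss_norm A s p * gauss_norm A s q"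
proof (cases "s = 0 \<or> p = 0 \<or> q = 0")
  case True
  then show ?thesis using assms by (auto simp: gauss_norm_at_0 mult coeff_mult_0)
next
  case False
  then show ?thesis using gauss_norm_mult_le gauss_norm_mult_ge assms by (simp add: antisym)
qed

end

section \<open>Berkovich points and the points \<open>\<zeta>(c, s)\<close>\<close>

lemma pcompose_shift_cancel: "pcompose (pcompose p [:c, 1:]) [:-c, 1:] = (p :: 'a::comm_ring_1 poly)"
  by (simp add: pcompose_assoc[symmetric] pcompose_pCons)

lemma pcompose_X_minus: "pcompose [:-c, 1:] q = q - [:c:]" for q :: "'a::comm_ring_1 poly"
  by (simp add: pcompose_pCons diff_conv_add_uminus minus_pCons add.commute)

lemma pcompose_prod_mset:
  "pcompose (\<Prod>z\<in>#R. f z) q = (\<Prod>z\<in>#R. pcompose (f z) (q :: 'a::comm_ring_1 poly))"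
  by (induction R) (simp_all add: pcompose_mult pcompose_1)

lemma poly_root_prod_mset:
  fixes R :: "'a::comm_ring_1 multiset"
  assumes "z \<in># R" shows "poly (smult l (\<Prod>x\<in>#R. [:-x, 1:])) z = 0"
proof -
  have "R = add_mset z (R - {#z#})" using assms by simp
  then have "(\<Prod>x\<in>#R. [:-x, 1:]) = [:-z, 1:] * (\<Prod>x\<in>#R - {#z#}. [:-x, 1:])"
    by (metis image_mset_add_mset prod_mset.add_mset)
  then show ?thesis by simp
qed

text \<open>A variant of \<open>alg_closed_imp_factorization\<close> for fields that are algebraically closed by
  hypothesis rather than by type class.\<close>
lemma split_if_roots_exist:
  fixes p :: "'a::field poly"
  assumes roots: "\<And>q::'a poly. degree q > 0 \<Longrightarrow> \<exists>z. poly q z = 0" and "p \<noteq> 0"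
  obtains R where "p = smult (lead_coeff p) (\<Prod>z\<in>#R. [:-z, 1:])"
proof -
  have "\<exists>R. p = smult (lead_coeff p) (\<Prod>z\<in>#R. [:-z, 1:])"
    if "degree p = n" "p \<noteq> 0" for n and p :: "'a poly"
    using that
  proof (induction n arbitrary: p)
    case 0
    then show ?case by (intro exI[of _ "{#}"]) (auto elim: degree_eq_zeroE)
  next
    case (Suc n)
    then obtain z where "poly p z = 0" using roots[of p] by auto
    then obtain q where pq: "p = [:-z, 1:] * q" by (metis dvdE poly_eq_0_iff_dvd)
    with Suc.prems have "q \<noteq> 0" by auto
    moreover from this have "degree p = Suc (degree q)" unfolding pq by (subst degree_mult_eq) auto
    ultimately have "degree q = n" "q \<noteq> 0" using Suc.prems by simp_all
    then obtain R where R: "q = smult (lead_coeff q) (\<Prod>z\<in>#R. [:-z, 1:])" using Suc.IH by blast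
    have lc: "lead_coeff p = lead_coeff q" unfolding pq lead_coeff_mult by simp
    have pR: "p = smult (lead_coeff q) ([:-z, 1:] * (\<Prod>z\<in>#R. [:-z, 1:]))"
      by (subst pq, subst R) simp
    have "p = smult (lead_coeff p) (\<Prod>z\<in>#add_mset z R. [:-z, 1:])"
      unfolding lc image_mset_add_mset prod_mset.add_mset by (fact pR)
    then show ?case ..
  qed
  then show ?thesis using that assms(2) by blast
qed

lemma na_mult_seminorm_smult_prod_mset:
  fixes N :: "'a::comm_ring_1 poly \<Rightarrow> real"
  assumes "na_mult_seminorm N"
  shows "N (smult l (\<Prod>z\<in>#R. f z)) = N [:l:] * (\<Prod>z\<in>#R. N (f z))"
proof -
  have "smult l (\<Prod>z\<in>#R. f z) = [:l:] * (\<Prod>z\<in>#R. f z)" by simp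
  then show ?thesis
    using na_mult_seminorm.mult[OF assms] na_mult_seminorm.prod_mset[OF assms] by metis
qed

context na_abs
begin

lemma disk_norm_mult: "0 \<le> s \<Longrightarrow> disk_norm A c s (p * q) = disk_norm A c s p * disk_norm A c s q"
  by (simp add: disk_norm_def pcompose_mult gauss_norm_mult)

lemma disk_norm_const [simp]: "disk_norm A c s [:a:] = A a"
  by (simp add: disk_norm_def)

lemma disk_norm_nonneg: "0 \<le> s \<Longrightarrow> 0 \<le> disk_norm A c s p"
  by (simp add: disk_norm_def gauss_norm_nonneg)

lemma disk_norm_add: "0 \<le> s \<Longrightarrow> disk_norm A c s (p + q) \<le> max (disk_norm A c s p) (disk_norm A c s q)"
  by (simp add: disk_norm_def pcompose_add gauss_norm_add)

lemma disk_norm_linear: "disk_norm A c s [:-z, 1:] = max (A (c - z)) s"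
  by (simp add: disk_norm_def pcompose_pCons gauss_norm_linear)

lemma disk_norm_plus_const:
  "0 \<le> s \<Longrightarrow> poly u c = 0 \<Longrightarrow> disk_norm A c s (u + [:b:]) = max (A b) (disk_norm A c s u)"
  by (simp add: disk_norm_def pcompose_add gauss_norm_plus_const)

lemma disk_norm_mono: "0 \<le> s \<Longrightarrow> s \<le> t \<Longrightarrow> disk_norm A c s p \<le> disk_norm A c t p"
  by (simp add: disk_norm_def gauss_norm_mono)

lemma disk_norm_le_radius:
  "0 \<le> t \<Longrightarrow> t \<le> 1 \<Longrightarrow> poly u c = 0 \<Longrightarrow> disk_norm A c t u \<le> t * disk_norm A c 1 u"
  by (simp add: disk_norm_def gauss_norm_le_radius)

lemma na_mult_seminorm_disk_norm: "0 \<le> s \<Longrightarrow> na_mult_seminorm (disk_norm A c s)"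
  using disk_norm_const[of c s 0] disk_norm_const[of c s 1]
  by unfold_locales (simp_all add: disk_norm_nonneg disk_norm_mult disk_norm_add one_pCons)

lemma berk_point_if_na_mult_seminorm:
  assumes "na_mult_seminorm x" "\<And>a. x [:a:] = A a" shows "berk_point A x"
proof -
  interpret x: na_mult_seminorm x by (fact assms(1))
  have "x (p + q) \<le> x p + x q" for p q
    using x.add_le_max[of p q] x.nonneg[of p] x.nonneg[of q] by linarith
  then show ?thesis using x.nonneg x.mult assms(2) by (simp add: berk_point_def)
qed

lemma berk_point_disk_norm: "0 \<le> s \<Longrightarrow> berk_point A (disk_norm A c s)"
  by (simp add: berk_point_if_na_mult_seminorm na_mult_seminorm_disk_norm)

lemma berk_point_classical_pt: "berk_point A (classical_pt A a)"
proof (rule berk_point_if_na_mult_seminorm)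
  show "na_mult_seminorm (classical_pt A a)"
    by unfold_locales (simp_all add: classical_pt_def nonneg mult add_le_max)
qed (simp add: classical_pt_def)

lemma na_mult_seminorm_berk_point:
  assumes "berk_point A x" shows "na_mult_seminorm x"
proof -
  have nonneg: "\<And>p. 0 \<le> x p" and mult: "\<And>p q. x (p * q) = x p * x q"
    and triangle: "\<And>p q. x (p + q) \<le> x p + x q" and const: "\<And>a. x [:a:] = A a"
    using assms by (auto simp: berk_point_def)
  have "x 0 = 0" "x 1 = 1" using const[of 0] const[of 1] by (simp_all add: one_pCons)
  moreover have "x (of_nat m) \<le> 1" for m
    using const[of "of_nat m"] of_nat_le_one by (simp add: of_nat_poly)
  ultimately show ?thesis
    using nonneg mult ultrametric_if_integers_bounded[of x, OF nonneg _ mult triangle]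
    by unfold_locales auto
qed

lemma berk_point_le_disk_norm:
  assumes x: "berk_point A x" shows "x p \<le> disk_norm A a (x [:-a, 1:]) p"
proof -
  interpret x: na_mult_seminorm x using na_mult_seminorm_berk_point[OF x] .
  define H where "H = pcompose p [:a, 1:]"
  define u where "u = [:-a, 1:]"
  have "p = pcompose H u" by (simp add: H_def u_def pcompose_shift_cancel)
  also have "\<dots> = (\<Sum>i\<le>degree H. [:coeff H i:] * u ^ i)"
    unfolding pcompose_altdef poly_altdef by (simp add: coeff_map_poly degree_map_poly)
  finally have "x p = x (\<Sum>i\<le>degree H. [:coeff H i:] * u ^ i)" by simp
  also have "\<dots> \<le> gauss_norm A (x u) H"
  proof (rule x.sum_le)
    fix i
    have "x ([:coeff H i:] * u ^ i) = x [:coeff H i:] * x u ^ i" by (simp only: x.mult x.power)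
    then have "x ([:coeff H i:] * u ^ i) = A (coeff H i) * x u ^ i"
      using x by (simp add: berk_point_def)
    then show "x ([:coeff H i:] * u ^ i) \<le> gauss_norm A (x u) H"
      using gauss_norm_ge[OF x.nonneg] by simp
  qed (simp add: gauss_norm_nonneg x.nonneg)
  finally show ?thesis by (simp add: disk_norm_def H_def u_def)
qed

lemma disk_norm_split:
  assumes "0 \<le> s" "p = smult l (\<Prod>z\<in>#R. [:-z, 1:])"
  shows "disk_norm A c s p = A l * (\<Prod>z\<in>#R. max (A (c - z)) s)"
  using na_mult_seminorm_smult_prod_mset[OF na_mult_seminorm_disk_norm[OF assms(1)],
      of c l "\<lambda>z. [:-z, 1:]" R] assms(2)
  by (simp add: disk_norm_linear)

lemma berk_point_eq_disk_norm:
  assumes x: "berk_point A x" and p: "p = smult l (\<Prod>z\<in>#R. [:-z, 1:])"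
    and avoid: "\<And>z. z \<in># R \<Longrightarrow> A (c - z) \<noteq> x [:-c, 1:]"
  shows "x p = disk_norm A c (x [:-c, 1:]) p"
proof -
  interpret x: na_mult_seminorm x using na_mult_seminorm_berk_point[OF x] .
  have const: "x [:b:] = A b" for b using x by (simp add: berk_point_def)
  have linear: "x [:-z, 1:] = max (A (c - z)) (x [:-c, 1:])" if "z \<in># R" for z
  proof -
    have "[:-z, 1:] = [:-c, 1:] + [:c - z:]" by simp
    then show ?thesis using x.add_eq_max[of "[:-c, 1:]" "[:c - z:]"] avoid[OF that] const
      by (simp add: max.commute)
  qed
  have "x p = A l * (\<Prod>z\<in>#R. x [:-z, 1:])"
    using na_mult_seminorm_smult_prod_mset[OF x.na_mult_seminorm_axioms] p const by simp
  also have "\<dots> = A l * (\<Prod>z\<in>#R. max (A (c - z)) (x [:-c, 1:]))"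
    using linear by (simp cong: image_mset_cong)
  also have "\<dots> = disk_norm A c (x [:-c, 1:]) p"
    using disk_norm_split[OF x.nonneg p] by simp
  finally show ?thesis .
qed

lemma disk_norm_pcompose:
  assumes roots: "\<And>q::'b poly. degree q > 0 \<Longrightarrow> \<exists>z. poly q z = 0"
    and s: "0 \<le> s" and fixed: "poly q c = c"
  shows "disk_norm A c s (pcompose p q) = disk_norm A c (disk_norm A c s (q - [:c:])) p"
proof (cases "p = 0")
  case False
  then obtain R where p: "p = smult (lead_coeff p) (\<Prod>z\<in>#R. [:-z, 1:])"
    using split_if_roots_exist[OF roots] by blast
  define t where "t = disk_norm A c s (q - [:c:])"
  have t: "0 \<le> t" using disk_norm_nonneg[OF s] by (simp add: t_def)
  have "pcompose [:-z, 1:] q = (q - [:c:]) + [:c - z:]" for z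
    by (simp add: pcompose_pCons algebra_simps)
  then have "pcompose p q = smult (lead_coeff p) (\<Prod>z\<in>#R. (q - [:c:]) + [:c - z:])"
    by (subst p) (simp only: pcompose_smult pcompose_prod_mset)
  then have "disk_norm A c s (pcompose p q)
      = A (lead_coeff p) * (\<Prod>z\<in>#R. disk_norm A c s ((q - [:c:]) + [:c - z:]))"
    using na_mult_seminorm_smult_prod_mset[OF na_mult_seminorm_disk_norm[OF s]] by simp
  also have "\<dots> = A (lead_coeff p) * (\<Prod>z\<in>#R. max (A (c - z)) t)"
    using disk_norm_plus_const[OF s, of "q - [:c:]"] fixed by (simp add: t_def cong: image_mset_cong)
  also have "\<dots> = disk_norm A c t p" using disk_norm_split[OF t p] by simp
  finally show ?thesis by (simp add: t_def)
qed (simp add: disk_norm_def)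

lemma hsia_classical_pt:
  assumes z: "z \<in> berk_disk A a t" and t: "t < A (a - c)"
  shows "hsia A z (classical_pt A c) = A (a - c)"
proof -
  have zb: "berk_point A z" and zt: "z [:-a, 1:] \<le> t" using z by (auto simp: berk_disk_def berk_line_def)
  interpret z: na_mult_seminorm z using na_mult_seminorm_berk_point[OF zb] .
  have const: "z [:b:] = A b" for b using zb by (simp add: berk_point_def)
  have "z [:-c, 1:] = z ([:a - c:] + [:-a, 1:])" by simp
  also have "\<dots> = z [:a - c:]" by (rule z.add_eq_left) (use zt t const in simp)
  finally have zc: "z [:-c, 1:] = A (a - c)" using const by simp
  define T where "T = {s. \<exists>b. z [:-b, 1:] \<le> s \<and> classical_pt A c [:-b, 1:] \<le> s}"
  have classical: "classical_pt A c [:-b, 1:] = A (c - b)" for b by (simp add: classical_pt_def)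
  have "A (a - c) \<in> T" unfolding T_def using zc classical[of c] nonneg by (intro CollectI exI[of _ c]) simp
  moreover have "A (a - c) \<le> s" if "s \<in> T" for s
  proof -
    obtain b where b: "z [:-b, 1:] \<le> s" "A (c - b) \<le> s" using \<open>s \<in> T\<close> classical by (auto simp: T_def)
    have "[:-c, 1:] = [:-b, 1:] + [:b - c:]" by simp
    then have "z [:-c, 1:] \<le> max (z [:-b, 1:]) (A (b - c))" using z.add_le_max const by metis
    then show ?thesis using zc b minus_commute[of b c] by simp
  qed
  ultimately have "Inf T = A (a - c)" by (intro cInf_eq_minimum)
  then show ?thesis by (simp add: hsia_def T_def)
qed

end

lemma prod_mset_max_monomial:
  fixes d :: "'a \<Rightarrow> real"
  assumes "\<forall>z\<in>#R. d z \<le> \<sigma>1 \<or> \<sigma>2 \<le> d z"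
  obtains C m where "\<And>\<sigma>. \<sigma>1 \<le> \<sigma> \<Longrightarrow> \<sigma> \<le> \<sigma>2 \<Longrightarrow> (\<Prod>z\<in>#R. max (d z) \<sigma>) = C * \<sigma> ^ m"
proof -
  have "\<exists>C m. \<forall>\<sigma>. \<sigma>1 \<le> \<sigma> \<longrightarrow> \<sigma> \<le> \<sigma>2 \<longrightarrow> (\<Prod>z\<in>#R. max (d z) \<sigma>) = C * \<sigma> ^ m"
    using assms
  proof (induction R)
    case empty
    then show ?case by (intro exI[of _ 1] exI[of _ 0]) simp
  next
    case (add z R)
    then obtain C m where Cm: "\<forall>\<sigma>. \<sigma>1 \<le> \<sigma> \<longrightarrow> \<sigma> \<le> \<sigma>2 \<longrightarrow> (\<Prod>z\<in>#R. max (d z) \<sigma>) = C * \<sigma> ^ m"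
      by auto
    show ?case
    proof (cases "d z \<le> \<sigma>1")
      case True
      then show ?thesis using Cm by (intro exI[of _ C] exI[of _ "Suc m"]) (auto simp: max_def)
    next
      case False
      then have "\<sigma>2 \<le> d z" using add.prems by auto
      then show ?thesis using Cm by (intro exI[of _ "d z * C"] exI[of _ m]) (auto simp: max_def)
    qed
  qed
  then show ?thesis using that by (metis (no_types))
qed

context na_abs
begin

text \<open>On an annulus free of roots of \<open>P\<close>, \<open>disk_norm A c \<sigma> P\<close> is a monomial \<open>C \<sigma>\<^sup>m\<close> in \<open>\<sigma>\<close>,
  and a monomial taking the same value at two radii is constant.\<close>
lemma root_in_annulus:
  assumes roots: "\<And>q::'b poly. degree q > 0 \<Longrightarrow> \<exists>z. poly q z = 0" and "P \<noteq> 0"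
    and radii: "0 < \<sigma>1" "\<sigma>1 < s" "s < \<sigma>2"
    and flat: "disk_norm A c \<sigma>1 P = disk_norm A c s P"
    and rising: "disk_norm A c s P < disk_norm A c \<sigma>2 P"
  obtains z where "poly P z = 0" "\<sigma>1 < A (c - z)" "A (c - z) < \<sigma>2"
proof (rule ccontr)
  assume no_root: "\<not> thesis"
  obtain R where R: "P = smult (lead_coeff P) (\<Prod>z\<in>#R. [:-z, 1:])"
    using split_if_roots_exist[OF roots \<open>P \<noteq> 0\<close>] by blast
  have "\<forall>z\<in>#R. A (c - z) \<le> \<sigma>1 \<or> \<sigma>2 \<le> A (c - z)"
    using no_root that poly_root_prod_mset R by (metis not_le)
  then obtain C m where Cm: "\<And>\<sigma>. \<sigma>1 \<le> \<sigma> \<Longrightarrow> \<sigma> \<le> \<sigma>2 \<Longrightarrow> (\<Prod>z\<in>#R. max (A (c - z)) \<sigma>) = C * \<sigma> ^ m"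
    by (rule prod_mset_max_monomial) blast+
  define K where "K = A (lead_coeff P) * C"
  have K: "disk_norm A c \<sigma> P = K * \<sigma> ^ m" if "\<sigma>1 \<le> \<sigma>" "\<sigma> \<le> \<sigma>2" for \<sigma>
    using disk_norm_split[OF _ R] Cm[OF that] that radii by (simp add: K_def)
  have "disk_norm A c \<sigma>1 P = K * \<sigma>1 ^ m" "disk_norm A c s P = K * s ^ m" using K radii by simp_all
  then have "K * \<sigma>1 ^ m = K * s ^ m" using flat by linarith
  moreover have "K * s ^ m < K * \<sigma>2 ^ m" using K[of s] K[of \<sigma>2] rising radii by simp
  ultimately show False
    using radii by (cases "K = 0 \<or> m = 0") (auto dest: power_strict_mono[of \<sigma>1 s m])
qed

end

section \<open>Dynamics near a superattracting fixed point\<close>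

lemma poly_iter_0: "poly_iter g 0 = [:0, 1:]"
  by (simp add: poly_iter_def)

lemma poly_iter_Suc: "poly_iter g (Suc n) = pcompose g (poly_iter g n)"
  by (simp add: poly_iter_def)

lemma poly_iter_add: "poly_iter g (m + n) = pcompose (poly_iter g m) (poly_iter g n)"
  for g :: "'a::comm_ring_1 poly"
  by (induction m) (simp_all add: poly_iter_Suc poly_iter_0 pcompose_pCons pcompose_assoc)

lemma poly_iter_Suc_right: "poly_iter g (Suc n) = pcompose (poly_iter g n) g"
  for g :: "'a::comm_ring_1 poly"
  using poly_iter_add[of g n 1] by (simp add: poly_iter_Suc poly_iter_0)

lemma poly_poly_iter_fixed: "poly g c = c \<Longrightarrow> poly (poly_iter g n) c = c"
  by (induction n) (simp_all add: poly_iter_Suc poly_iter_0 poly_pcompose)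

definition berk_push :: "'a::comm_ring_1 poly \<Rightarrow> ('a poly \<Rightarrow> real) \<Rightarrow> 'a poly \<Rightarrow> real" where
  "berk_push G x p = x (pcompose p G)"

lemma berk_point_berk_push: "berk_point A x \<Longrightarrow> berk_point A (berk_push G x)"
  by (simp add: berk_point_def berk_push_def pcompose_mult pcompose_add)

lemma berk_push_poly_iter_Suc:
  "berk_push (poly_iter g (Suc n)) x p = berk_push (poly_iter g n) x (pcompose p g)"
  by (simp add: berk_push_def poly_iter_Suc pcompose_assoc)

locale superattracting = na_abs A for A :: "'b::field \<Rightarrow> real" +
  fixes g :: "'b poly" and c :: 'b
  assumes roots_exist: "\<And>q::'b poly. degree q > 0 \<Longrightarrow> \<exists>z. poly q z = 0"
    and degree_g: "2 \<le> degree g"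
    and fixed: "poly g c = c"
    and double_root: "[:-c, 1:] ^ 2 dvd g - [:c:]"
begin

definition h :: "'b poly" where "h = g - [:c:]"

text \<open>\<open>g\<close> maps \<open>\<zeta>(c, s)\<close> to \<open>\<zeta>(c, radius_map s)\<close>; see \<open>disk_norm_pcompose\<close>.\<close>
definition radius_map :: "real \<Rightarrow> real" where "radius_map s = disk_norm A c s h"

lemma poly_h_c: "poly h c = 0"
  by (simp add: h_def fixed)

lemma degree_h: "degree h = degree g"
proof -
  have "degree (g + [:-c:]) = degree g" using degree_g by (intro degree_add_eq_left) simp
  then show ?thesis by (simp add: h_def diff_conv_add_uminus minus_pCons)
qed

lemma h_nonzero: "h \<noteq> 0"
  using degree_h degree_g by auto

lemma coeff_h_shift_lt_2: "k < 2 \<Longrightarrow> coeff (pcompose h [:c, 1:]) k = 0"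
proof -
  assume "k < 2"
  obtain q where "h = [:-c, 1:] ^ 2 * q" using double_root by (auto simp: h_def elim: dvdE)
  moreover have "pcompose [:-c, 1:] [:c, 1:] = [:0, 1:]" by (simp add: pcompose_pCons)
  ultimately have "pcompose h [:c, 1:] = [:0, 1:] ^ 2 * pcompose q [:c, 1:]"
    by (simp only: pcompose_mult power2_eq_square)
  then show ?thesis
    using \<open>k < 2\<close> by (auto simp: less_2_cases_iff power2_eq_square mult_pCons_left)
qed

lemma radius_map_nonneg: "0 \<le> s \<Longrightarrow> 0 \<le> radius_map s"
  by (simp add: radius_map_def disk_norm_nonneg)

lemma radius_map_mono: "0 \<le> s \<Longrightarrow> s \<le> t \<Longrightarrow> radius_map s \<le> radius_map t"
  by (simp add: radius_map_def disk_norm_mono)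

lemma continuous_on_radius_map: "continuous_on S radius_map"
  unfolding radius_map_def disk_norm_def gauss_norm_def by (rule continuous_on_weighted_max)

text \<open>Only monomials of degree at least 2 contribute to \<open>radius_map s\<close>, so \<open>radius_map s / s\<close> is
  strictly increasing.\<close>
lemma radius_map_ratio_less:
  assumes "0 < s" "s < t" shows "radius_map s * t < radius_map t * s"
proof -
  obtain k where k: "radius_map s = A (coeff (pcompose h [:c, 1:]) k) * s ^ k"
    using gauss_norm_attained by (metis radius_map_def disk_norm_def)
  define a where "a = A (coeff (pcompose h [:c, 1:]) k)"
  have "pcompose h [:c, 1:] \<noteq> 0" using h_nonzero by (simp add: pcompose_eq_0_iff)
  then have "0 < radius_map s"
    using gauss_norm_pos assms by (simp add: radius_map_def disk_norm_def)
  then have a: "0 < a" and "coeff (pcompose h [:c, 1:]) k \<noteq> 0"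
    using k assms by (auto simp: a_def zero_less_mult_iff)
  then have k2: "2 \<le> k" using coeff_h_shift_lt_2 not_less by blast
  have "s ^ (k - 1) < t ^ (k - 1)" using assms k2 by (intro power_strict_mono) auto
  then have "a * s ^ (k - 1) * (s * t) < a * t ^ (k - 1) * (s * t)" using a assms by simp
  moreover have "s ^ k = s ^ (k - 1) * s" "t ^ k = t ^ (k - 1) * t" using k2
    by (simp_all add: power_Suc2[symmetric])
  ultimately have "a * s ^ k * t < a * t ^ k * s" by (simp add: mult_ac)
  moreover have "a * t ^ k \<le> radius_map t"
    using gauss_norm_ge[of t] assms by (simp add: a_def radius_map_def disk_norm_def)
  ultimately show ?thesis using k assms a_def by (smt (verit) mult_right_mono)
qed

lemma radius_map_strict_mono: assumes "0 < s" "s < t" shows "radius_map s < radius_map t"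
proof -
  have "radius_map s * s \<le> radius_map s * t"
    using assms radius_map_nonneg[of s] by (simp add: mult_left_mono)
  then have "radius_map s * s < radius_map t * s" using radius_map_ratio_less[OF assms] by linarith
  then show ?thesis using assms by simp
qed

lemma radius_map_le_square: assumes "0 \<le> s" "s \<le> 1" shows "radius_map s \<le> s ^ 2 * radius_map 1"
  unfolding radius_map_def disk_norm_def
proof (rule gauss_norm_le)
  fix k
  show "A (coeff (pcompose h [:c, 1:]) k) * s ^ k \<le> s ^ 2 * gauss_norm A 1 (pcompose h [:c, 1:])"
  proof (cases "k < 2")
    case False
    then have "A (coeff (pcompose h [:c, 1:]) k) * s ^ k \<le> A (coeff (pcompose h [:c, 1:]) k) * s ^ 2"
      using assms nonneg by (intro mult_left_mono power_decreasing) auto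
    also have "\<dots> \<le> gauss_norm A 1 (pcompose h [:c, 1:]) * s ^ 2"
      using gauss_norm_ge[of 1] by (intro mult_right_mono) simp_all
    finally show ?thesis by (simp add: mult.commute)
  qed (use coeff_h_shift_lt_2 assms gauss_norm_nonneg in simp)
qed

lemma radius_map_ge_lead: "0 \<le> s \<Longrightarrow> A (lead_coeff h) * s ^ degree g \<le> radius_map s"
proof -
  assume "0 \<le> s"
  have "degree (pcompose h [:c, 1:]) = degree g" by (simp add: degree_pcompose degree_h)
  moreover have "lead_coeff (pcompose h [:c, 1:]) = lead_coeff h" by (simp add: lead_coeff_comp)
  ultimately show ?thesis
    using gauss_norm_ge[OF \<open>0 \<le> s\<close>, of "pcompose h [:c, 1:]" "degree g"]
    by (simp add: radius_map_def disk_norm_def)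
qed

lemma exists_fixed_radius: "\<exists>r>0. radius_map r = r"
proof -
  define a where "a = min (1 / 2) (1 / (radius_map 1 + 1))"
  have a: "0 < a" "a \<le> 1" "a * radius_map 1 \<le> 1"
    using radius_map_nonneg[of 1] by (auto simp: a_def min_def field_simps)
  have "radius_map a \<le> a * (a * radius_map 1)"
    using radius_map_le_square[of a] a by (simp add: power2_eq_square mult.assoc)
  also have "\<dots> \<le> a" using a by (simp add: mult_left_le)
  finally have below: "radius_map a - a \<le> 0" by simp
  define l where "l = A (lead_coeff h)"
  have l: "0 < l" using h_nonzero pos by (simp add: l_def)
  define b where "b = max a (max 1 (1 / l))"
  have "l * (1 / l) \<le> l * b" using l by (intro mult_left_mono) (auto simp: b_def)
  then have b: "a \<le> b" "1 \<le> b" "1 \<le> l * b" using l by (auto simp: b_def)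
  have "b \<le> b ^ (degree g - 1)"
    using power_increasing[of 1 "degree g - 1" b] b degree_g by simp
  also have "\<dots> \<le> (l * b) * b ^ (degree g - 1)" using b by simp
  also have "\<dots> = l * b ^ degree g" using degree_g by (cases "degree g") auto
  also have "\<dots> \<le> radius_map b" using radius_map_ge_lead b by (simp add: l_def)
  finally have above: "0 \<le> radius_map b - b" by simp
  have "continuous_on {a..b} (\<lambda>s. radius_map s - s)"
    by (intro continuous_intros continuous_on_radius_map)
  then obtain r where "a \<le> r" "r \<le> b" "radius_map r - r = 0"
    using IVT'[of "\<lambda>s. radius_map s - s" a 0 b] below above b by auto
  then show ?thesis using a by (intro exI[of _ r]) auto
qed

definition r :: real where "r = (SOME r. 0 < r \<and> radius_map r = r)"

lemma r_pos: "0 < r" and radius_map_r: "radius_map r = r"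
  using someI_ex[OF exists_fixed_radius] by (auto simp: r_def)

lemma radius_map_gt_self: "r < s \<Longrightarrow> s < radius_map s"
  using radius_map_ratio_less[of r s] radius_map_r r_pos by (simp add: mult.commute)

lemma radius_map_expands:
  assumes "r < s" "s \<le> t" shows "(radius_map s / s) * t \<le> radius_map t"
proof (cases "s = t")
  case False
  then have "radius_map s * t < radius_map t * s" using radius_map_ratio_less[of s t] assms r_pos by simp
  then show ?thesis using assms r_pos by (simp add: field_simps)
qed (use assms r_pos in simp)

definition Kv :: "('b poly \<Rightarrow> real) set" where "Kv = filled_julia A g"

abbreviation orbit :: "('b poly \<Rightarrow> real) \<Rightarrow> nat \<Rightarrow> 'b poly \<Rightarrow> real" where
  "orbit x n \<equiv> berk_push (poly_iter g n) x"

lemma mem_Kv_iff: "x \<in> Kv \<longleftrightarrow> berk_point A x \<and> (\<exists>M>0. \<forall>n. x (poly_iter g n) \<le> M)"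
  by (simp add: Kv_def filled_julia_def berk_line_def)

lemma orbit_0: "orbit x 0 = x"
  by (simp add: berk_push_def poly_iter_0 fun_eq_iff)

lemma orbit_X: "orbit x n [:0, 1:] = x (poly_iter g n)"
  by (simp add: berk_push_def pcompose_pCons)

lemma orbit_dist_Suc: "orbit x (Suc n) [:-c, 1:] = orbit x n h"
  by (simp add: berk_push_poly_iter_Suc pcompose_X_minus h_def)

lemma iterate_le_max_orbit_dist:
  assumes "berk_point A x" shows "x (poly_iter g n) \<le> max (orbit x n [:-c, 1:]) (A c)"
proof -
  have y: "berk_point A (orbit x n)" using berk_point_berk_push[OF assms] .
  interpret y: na_mult_seminorm "orbit x n" using na_mult_seminorm_berk_point[OF y] .
  have "orbit x n [:0, 1:] \<le> max (orbit x n [:-c, 1:]) (orbit x n [:c:])"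
    using y.add_le_max[of "[:-c, 1:]" "[:c:]"] by simp
  then show ?thesis using y orbit_X[where x = x and n = n] by (simp add: berk_point_def)
qed

lemma orbit_dist_le_iterate:
  assumes "berk_point A x" shows "orbit x n [:-c, 1:] \<le> x (poly_iter g n) + A c"
proof -
  have y: "berk_point A (orbit x n)" using berk_point_berk_push[OF assms] .
  interpret y: na_mult_seminorm "orbit x n" using na_mult_seminorm_berk_point[OF y] .
  have "orbit x n [:-c, 1:] \<le> max (orbit x n [:0, 1:]) (orbit x n [:-c:])"
    using y.add_le_max[of "[:0, 1:]" "[:-c:]"] by simp
  moreover have "orbit x n [:-c:] = A c" using y by (simp add: berk_point_def)
  ultimately show ?thesis
    using orbit_X[where x = x and n = n] y.nonneg[of "[:0, 1:]"] nonneg[of c] by linarith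
qed

lemma mem_Kv_if_dist_le_r:
  assumes x: "berk_point A x" and "x [:-c, 1:] \<le> r" shows "x \<in> Kv"
proof -
  have dist: "orbit x n [:-c, 1:] \<le> r" for n
  proof (induction n)
    case 0
    then show ?case using assms by (simp add: orbit_0)
  next
    case (Suc n)
    have y: "berk_point A (orbit x n)" using berk_point_berk_push[OF x] .
    have "orbit x (Suc n) [:-c, 1:] = orbit x n h" by (rule orbit_dist_Suc)
    also have "\<dots> \<le> radius_map (orbit x n [:-c, 1:])"
      unfolding radius_map_def by (rule berk_point_le_disk_norm[OF y])
    also have "\<dots> \<le> radius_map r"
      using Suc na_mult_seminorm.nonneg[OF na_mult_seminorm_berk_point[OF y]] by (intro radius_map_mono)
    finally show ?case using radius_map_r by simp
  qed
  have "x (poly_iter g n) \<le> max r (A c)" for n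
    using iterate_le_max_orbit_dist[OF x, where n = n] dist[of n] by linarith
  moreover have "0 < max r (A c)" using r_pos by simp
  ultimately show ?thesis using x mem_Kv_iff by blast
qed

text \<open>Beyond \<open>r\<close> the ratio \<open>radius_map s / s\<close> exceeds 1 and increases, so the distance grows
  geometrically.\<close>
lemma notin_Kv_if_escaping:
  assumes x: "berk_point A x" and far: "r < x [:-c, 1:]"
    and step: "\<And>n. radius_map (orbit x n [:-c, 1:]) \<le> orbit x (Suc n) [:-c, 1:]"
  shows "x \<notin> Kv"
proof
  assume "x \<in> Kv"
  then obtain M where M: "\<And>n. x (poly_iter g n) \<le> M" using mem_Kv_iff by blast
  define \<sigma> where "\<sigma> = x [:-c, 1:]"
  define q where "q = radius_map \<sigma> / \<sigma>"
  have \<sigma>: "0 < \<sigma>" using far r_pos by (simp add: \<sigma>_def)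
  have q: "1 < q" using radius_map_gt_self[of \<sigma>] far \<sigma> by (simp add: q_def \<sigma>_def field_simps)
  have grow: "q ^ n * \<sigma> \<le> orbit x n [:-c, 1:]" for n
  proof (induction n)
    case 0
    then show ?case by (simp add: orbit_0 \<sigma>_def)
  next
    case (Suc n)
    have "\<sigma> \<le> q ^ n * \<sigma>" using q \<sigma> by simp
    then have "\<sigma> \<le> orbit x n [:-c, 1:]" using Suc by linarith
    have "q ^ Suc n * \<sigma> \<le> q * orbit x n [:-c, 1:]" using Suc q by simp
    also have "\<dots> \<le> radius_map (orbit x n [:-c, 1:])"
      using radius_map_expands[of \<sigma>] far \<open>\<sigma> \<le> orbit x n [:-c, 1:]\<close> by (simp add: q_def \<sigma>_def)
    also have "\<dots> \<le> orbit x (Suc n) [:-c, 1:]" by (rule step)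
    finally show ?case .
  qed
  obtain n where "(M + A c) / \<sigma> < q ^ n" using real_arch_pow[OF q] by blast
  then have "M + A c < q ^ n * \<sigma>" using \<sigma> by (simp add: field_simps)
  also have "\<dots> \<le> x (poly_iter g n) + A c" using grow orbit_dist_le_iterate[OF x] order_trans by blast
  finally show False using M[of n] by simp
qed

lemma disk_norm_notin_Kv: assumes "r < s" shows "disk_norm A c s \<notin> Kv"
proof -
  have s: "0 \<le> s" using assms r_pos by simp
  have dist: "disk_norm A c s [:-c, 1:] = s" using disk_norm_linear[of c s c] s by simp
  show ?thesis
  proof (rule notin_Kv_if_escaping[OF berk_point_disk_norm[OF s]])
    show "r < disk_norm A c s [:-c, 1:]" using dist assms by simp
    fix n
    have "orbit (disk_norm A c s) (Suc n) [:-c, 1:] = disk_norm A c s (pcompose h (poly_iter g n))"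
      by (simp only: orbit_dist_Suc) (simp add: berk_push_def)
    also have "\<dots> = radius_map (disk_norm A c s (poly_iter g n - [:c:]))"
      unfolding radius_map_def
      by (rule disk_norm_pcompose[OF roots_exist s poly_poly_iter_fixed[OF fixed]])
    also have "disk_norm A c s (poly_iter g n - [:c:]) = orbit (disk_norm A c s) n [:-c, 1:]"
      by (simp add: berk_push_def pcompose_X_minus)
    finally show "radius_map (orbit (disk_norm A c s) n [:-c, 1:])
        \<le> orbit (disk_norm A c s) (Suc n) [:-c, 1:]" by simp
  qed
qed

lemma Kv_eq_disk_if_roots_near:
  assumes h: "h = smult l (\<Prod>z\<in>#R. [:-z, 1:])" and near: "\<And>z. z \<in># R \<Longrightarrow> A (c - z) \<le> r"
  shows "Kv = berk_disk A c r"
proof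
  show "berk_disk A c r \<subseteq> Kv"
    using mem_Kv_if_dist_le_r by (auto simp: berk_disk_def berk_line_def)
  show "Kv \<subseteq> berk_disk A c r"
  proof
    fix x assume "x \<in> Kv"
    then have x: "berk_point A x" using mem_Kv_iff by blast
    show "x \<in> berk_disk A c r"
    proof (rule ccontr)
      assume "x \<notin> berk_disk A c r"
      then have far: "r < x [:-c, 1:]" using x by (simp add: berk_disk_def berk_line_def)
      text \<open>Beyond \<open>r\<close> no root of \<open>h\<close> is at the distance of the orbit, which therefore follows
        \<open>radius_map\<close> exactly.\<close>
      have step: "orbit x (Suc n) [:-c, 1:] = radius_map (orbit x n [:-c, 1:])"
        if "r < orbit x n [:-c, 1:]" for n
        unfolding orbit_dist_Suc radius_map_def
        by (rule berk_point_eq_disk_norm[OF berk_point_berk_push[OF x] h])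
           (use near that in fastforce)
      have "r < orbit x n [:-c, 1:]" for n
      proof (induction n)
        case (Suc n)
        then show ?case using step radius_map_gt_self[OF Suc] by simp
      qed (use far in \<open>simp add: orbit_0\<close>)
      then have "x \<notin> Kv" using notin_Kv_if_escaping[OF x far] step by simp
      then show False using \<open>x \<in> Kv\<close> by simp
    qed
  qed
qed

lemma Sup_disk_radii_Kv: "Sup {s. 0 < s \<and> berk_disk A c s \<subseteq> Kv} = r"
proof (rule cSup_eq_maximum)
  show "r \<in> {s. 0 < s \<and> berk_disk A c s \<subseteq> Kv}"
    using r_pos mem_Kv_if_dist_le_r by (auto simp: berk_disk_def berk_line_def)
  fix s assume "s \<in> {s. 0 < s \<and> berk_disk A c s \<subseteq> Kv}"
  then have s: "0 < s" "berk_disk A c s \<subseteq> Kv" by simp_all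
  have "disk_norm A c s \<in> berk_disk A c s"
    using berk_point_disk_norm[of s c] disk_norm_linear[of c s c] s
    by (simp add: berk_disk_def berk_line_def)
  then show "s \<le> r" using disk_norm_notin_Kv[of s] s by (meson not_le subsetD)
qed

lemma exists_root_gap:
  assumes "Kv \<noteq> berk_disk A c r"
  obtains R l \<rho>0 \<alpha> where "h = smult l (\<Prod>z\<in>#R. [:-z, 1:])" "\<alpha> \<in># R" "A (c - \<alpha>) = \<rho>0" "r < \<rho>0"
    and "\<forall>z\<in>#R. A (c - z) \<le> r \<or> \<rho>0 \<le> A (c - z)"
proof -
  obtain R where h: "h = smult (lead_coeff h) (\<Prod>z\<in>#R. [:-z, 1:])"
    using split_if_roots_exist[OF roots_exist h_nonzero] by blast
  define D where "D = {A (c - z) | z. z \<in># R \<and> r < A (c - z)}"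
  have "finite D" by (simp add: D_def)
  moreover have "D \<noteq> {}"
    using Kv_eq_disk_if_roots_near[OF h] assms by (force simp: D_def)
  ultimately have "Min D \<in> D" and min: "\<And>d. d \<in> D \<Longrightarrow> Min D \<le> d" by simp_all
  then obtain \<alpha> where "\<alpha> \<in># R" "A (c - \<alpha>) = Min D" "r < Min D" by (auto simp: D_def)
  moreover have "\<forall>z\<in>#R. A (c - z) \<le> r \<or> Min D \<le> A (c - z)"
  proof
    fix z assume "z \<in># R"
    then have "r < A (c - z) \<Longrightarrow> A (c - z) \<in> D" by (auto simp: D_def)
    then show "A (c - z) \<le> r \<or> Min D \<le> A (c - z)" using min by force
  qed
  ultimately show ?thesis using that[OF h] by blast
qed

lemma exists_preimage_closer:
  assumes h: "h = smult l (\<Prod>z\<in>#R. [:-z, 1:])"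
    and gap: "\<forall>z\<in>#R. A (c - z) \<le> r \<or> \<rho>0 \<le> A (c - z)"
    and w: "r < A (w - c)" "A (w - c) \<le> \<rho>0"
  obtains z where "poly g z = w" "r < A (z - c)" "A (z - c) < \<rho>0"
    and "radius_map (A (z - c)) = A (w - c)"
proof -
  define \<rho> where "\<rho> = A (w - c)"
  have \<rho>0: "r < \<rho>0" using w by simp
  have "radius_map r \<le> \<rho>" "\<rho> \<le> radius_map \<rho>0"
    using radius_map_r radius_map_gt_self[OF \<rho>0] w by (simp_all add: \<rho>_def)
  then obtain s where s: "r \<le> s" "s \<le> \<rho>0" "radius_map s = \<rho>"
    using IVT'[of radius_map r \<rho> \<rho>0] \<rho>0 continuous_on_radius_map by auto
  then have "r < s" "s < \<rho>0"
    using radius_map_r radius_map_gt_self[OF \<rho>0] w by (auto simp: \<rho>_def order_le_less)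
  define \<sigma>1 \<sigma>2 where "\<sigma>1 = (r + s) / 2" and "\<sigma>2 = (s + \<rho>0) / 2"
  have radii: "r < \<sigma>1" "\<sigma>1 < s" "s < \<sigma>2" "\<sigma>2 < \<rho>0"
    using \<open>r < s\<close> \<open>s < \<rho>0\<close> by (auto simp: \<sigma>1_def \<sigma>2_def)
  define P where "P = g - [:w:]"
  have "P \<noteq> 0" using degree_g by (auto simp: P_def)
  have disk_norm_P: "disk_norm A c \<sigma> P = max \<rho> (radius_map \<sigma>)" if "0 \<le> \<sigma>" for \<sigma>
  proof -
    have "P = h + [:c - w:]" by (simp add: P_def h_def)
    then show ?thesis
      using disk_norm_plus_const[OF that poly_h_c] minus_commute[of c w]
      by (simp add: radius_map_def \<rho>_def)
  qed
  have "radius_map \<sigma>1 < \<rho>" "\<rho> < radius_map \<sigma>2"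
    using radius_map_strict_mono[of \<sigma>1 s] radius_map_strict_mono[of s \<sigma>2] radii r_pos s by simp_all
  then obtain \<zeta> where \<zeta>: "poly P \<zeta> = 0" "\<sigma>1 < A (c - \<zeta>)" "A (c - \<zeta>) < \<sigma>2"
    using root_in_annulus[OF roots_exist \<open>P \<noteq> 0\<close>, of \<sigma>1 s \<sigma>2 c] disk_norm_P radii r_pos s
    by (smt (verit))
  have "classical_pt A \<zeta> h = disk_norm A c (classical_pt A \<zeta> [:-c, 1:]) h"
    using gap \<zeta> radii
    by (intro berk_point_eq_disk_norm[OF berk_point_classical_pt h])
       (force simp: classical_pt_def minus_commute[of \<zeta>])
  then have "radius_map (A (\<zeta> - c)) = \<rho>"
    using \<zeta>(1) by (simp add: classical_pt_def radius_map_def h_def P_def \<rho>_def minus_commute[of w])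
  then show ?thesis
    using that[of \<zeta>] \<zeta> radii by (simp add: P_def \<rho>_def minus_commute[of \<zeta>])
qed

lemma radii_tendsto_r:
  assumes above: "\<And>n. r < \<rho> n" and pullback: "\<And>n. radius_map (\<rho> (Suc n)) = \<rho> n"
  shows "\<rho> \<longlonglongrightarrow> r"
proof -
  have "\<rho> (Suc n) \<le> \<rho> n" for n
    using radius_map_gt_self[OF above[of "Suc n"]] pullback[of n] by simp
  then have "decseq \<rho>" by (rule decseq_SucI)
  then obtain L where L: "\<rho> \<longlonglongrightarrow> L"
    using decseq_convergent[of \<rho> r] above by (meson less_imp_le)
  have "r \<le> L" using LIMSEQ_le_const[OF L, of r] above less_imp_le by blast
  have "isCont radius_map L"
    using continuous_on_radius_map[of UNIV] by (simp add: continuous_on_eq_continuous_at)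
  then have "(\<lambda>n. radius_map (\<rho> (Suc n))) \<longlonglongrightarrow> radius_map L"
    using LIMSEQ_Suc[OF L] by (rule isCont_tendsto_compose)
  then have "radius_map L = L" using L pullback LIMSEQ_unique by simp
  then have "L = r" using \<open>r \<le> L\<close> radius_map_gt_self[of L] by fastforce
  then show ?thesis using L by simp
qed

lemma exists_preimage_sequence:
  assumes "Kv \<noteq> berk_disk A c r"
  obtains a where "\<And>n. r < A (a n - c)" and "\<And>n. poly (poly_iter g (Suc n)) (a n) = c"
    and "(\<lambda>n. A (a n - c)) \<longlonglongrightarrow> r"
proof -
  obtain R l \<rho>0 \<alpha> where h: "h = smult l (\<Prod>z\<in>#R. [:-z, 1:])" and "\<alpha> \<in># R" "A (c - \<alpha>) = \<rho>0"
    and "r < \<rho>0" and gap: "\<forall>z\<in>#R. A (c - z) \<le> r \<or> \<rho>0 \<le> A (c - z)"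
    by (rule exists_root_gap[OF assms])
  have "poly h \<alpha> = 0" using poly_root_prod_mset[OF \<open>\<alpha> \<in># R\<close>, of l] h by simp
  then have g_\<alpha>: "poly g \<alpha> = c" by (simp add: h_def)
  define P where "P n z \<longleftrightarrow> r < A (z - c) \<and> A (z - c) \<le> \<rho>0 \<and> poly (poly_iter g n) z = \<alpha>" for n z
  define Q where "Q z z' \<longleftrightarrow> poly g z' = z \<and> radius_map (A (z' - c)) = A (z - c)" for z z'
  have "P 0 \<alpha>"
    using \<open>A (c - \<alpha>) = \<rho>0\<close> \<open>r < \<rho>0\<close> minus_commute[of \<alpha> c] by (simp add: P_def poly_iter_0)
  moreover have "\<exists>z'. P (Suc n) z' \<and> Q z z'" if "P n z" for n z
  proof -
    have iter: "poly (poly_iter g n) z = \<alpha>" using that by (simp add: P_def)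
    have "r < A (z - c)" "A (z - c) \<le> \<rho>0" using that by (simp_all add: P_def)
    then obtain z' where z': "poly g z' = z" "r < A (z' - c)" "A (z' - c) < \<rho>0"
      "radius_map (A (z' - c)) = A (z - c)"
      by (rule exists_preimage_closer[OF h gap])
    have "poly (poly_iter g (Suc n)) z' = \<alpha>"
      using iter z'(1) by (simp add: poly_iter_Suc_right poly_pcompose)
    then show ?thesis using z' by (intro exI[of _ z']) (simp add: P_def Q_def)
  qed
  ultimately have "\<exists>a. \<forall>n. P n (a n) \<and> Q (a n) (a (Suc n))"
    using dependent_nat_choice[of P "\<lambda>_. Q"] by blast
  then obtain a where P: "\<And>n. P n (a n)" and Q: "\<And>n. Q (a n) (a (Suc n))" by blast
  have far: "r < A (a n - c)" for n using P[of n] by (simp add: P_def)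
  moreover have "poly (poly_iter g (Suc n)) (a n) = c" for n
    using P[of n] g_\<alpha> by (simp add: P_def poly_iter_Suc poly_pcompose)
  moreover have "radius_map (A (a (Suc n) - c)) = A (a n - c)" for n
    using Q[of n] by (simp add: Q_def)
  then have "(\<lambda>n. A (a n - c)) \<longlonglongrightarrow> r" using far by (intro radii_tendsto_r)
  ultimately show ?thesis by (rule that)
qed

lemma mem_Kv_if_orbit_mem_Kv:
  assumes x: "berk_point A x" and "orbit x N \<in> Kv" shows "x \<in> Kv"
proof -
  obtain M where M: "0 < M" "\<And>k. orbit x N (poly_iter g k) \<le> M" using assms mem_Kv_iff by blast
  define M' where "M' = M + (\<Sum>j<N. x (poly_iter g j))"
  have S: "0 \<le> (\<Sum>j<N. x (poly_iter g j))" using x by (simp add: berk_point_def sum_nonneg)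
  have "x (poly_iter g k) \<le> M'" for k
  proof (cases "k < N")
    case True
    then have "x (poly_iter g k) \<le> (\<Sum>j<N. x (poly_iter g j))"
      using x by (intro member_le_sum) (simp_all add: berk_point_def)
    then show ?thesis using M by (simp add: M'_def)
  next
    case False
    then have "x (poly_iter g k) = orbit x N (poly_iter g (k - N))"
      by (simp add: berk_push_def poly_iter_add[symmetric])
    then show ?thesis using M(2)[of "k - N"] S by (simp add: M'_def)
  qed
  moreover have "0 < M'" using M S by (simp add: M'_def)
  ultimately show ?thesis using x mem_Kv_iff by blast
qed

text \<open>Points close to a preimage \<open>a\<close> of \<open>c\<close> land after \<open>N\<close> steps within distance \<open>r\<close> of \<open>c\<close>.\<close>
lemma small_disk_subset_Kv:
  assumes a: "poly (poly_iter g N) a = c" and "0 < \<epsilon>"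
  obtains t where "0 < t" "t < \<epsilon>" "berk_disk A a t \<subseteq> Kv"
proof -
  define Q where "Q = poly_iter g N - [:c:]"
  define G where "G = disk_norm A a 1 Q"
  define t where "t = min (\<epsilon> / 2) (min 1 (r / (G + 1)))"
  have G: "0 \<le> G" using disk_norm_nonneg by (simp add: G_def)
  have "0 < r / (G + 1)" using r_pos G by simp
  then have t: "0 < t" "t < \<epsilon>" "t \<le> 1" "t \<le> r / (G + 1)" using \<open>0 < \<epsilon>\<close> by (simp_all add: t_def)
  have "t * G \<le> r / (G + 1) * G" by (rule mult_right_mono[OF t(4) G])
  also have "\<dots> \<le> r" using G r_pos by (simp add: field_simps)
  finally have tG: "t * G \<le> r" .
  have "x \<in> Kv" if "x \<in> berk_disk A a t" for x
  proof -
    have x: "berk_point A x" and xt: "x [:-a, 1:] \<le> t" using that by (auto simp: berk_disk_def berk_line_def)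
    have "0 \<le> x [:-a, 1:]" using x by (simp add: berk_point_def)
    have "orbit x N [:-c, 1:] = x Q" by (simp add: berk_push_def pcompose_X_minus Q_def)
    also have "\<dots> \<le> disk_norm A a (x [:-a, 1:]) Q" by (rule berk_point_le_disk_norm[OF x])
    also have "\<dots> \<le> disk_norm A a t Q" by (rule disk_norm_mono[OF \<open>0 \<le> x [:-a, 1:]\<close> xt])
    also have "\<dots> \<le> t * G"
      unfolding G_def by (rule disk_norm_le_radius) (use t a in \<open>simp_all add: Q_def\<close>)
    finally have "orbit x N [:-c, 1:] \<le> r" using tG by linarith
    then have "orbit x N \<in> Kv" by (rule mem_Kv_if_dist_le_r[OF berk_point_berk_push[OF x]])
    then show ?thesis by (rule mem_Kv_if_orbit_mem_Kv[OF x])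
  qed
  then show ?thesis using that t by blast
qed

theorem disks_in_Kv_accumulating:
  assumes "\<not> is_berk_disk A Kv"
  obtains B rs where "\<And>i. is_berk_disk A (B i) \<and> B i \<subseteq> Kv \<and> r < rs i \<and>
      (\<forall>z\<in>B i. hsia A z (classical_pt A c) = rs i)" and "rs \<longlonglongrightarrow> r"
proof -
  have "Kv \<noteq> berk_disk A c r" using assms r_pos by (auto simp: is_berk_disk_def)
  then obtain a where far: "\<And>n. r < A (a n - c)" and preimage: "\<And>n. poly (poly_iter g (Suc n)) (a n) = c"
    and lim: "(\<lambda>n. A (a n - c)) \<longlonglongrightarrow> r"
    by (rule exists_preimage_sequence) blast
  have "\<exists>t. 0 < t \<and> t < A (a n - c) \<and> berk_disk A (a n) t \<subseteq> Kv" for n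
  proof -
    have "0 < A (a n - c)" using far[of n] r_pos by linarith
    then obtain t where "0 < t" "t < A (a n - c)" "berk_disk A (a n) t \<subseteq> Kv"
      by (rule small_disk_subset_Kv[OF preimage])
    then show ?thesis by blast
  qed
  then obtain t where t: "\<And>n. 0 < t n \<and> t n < A (a n - c) \<and> berk_disk A (a n) (t n) \<subseteq> Kv"
    by metis
  have "is_berk_disk A (berk_disk A (a i) (t i))" for i
    unfolding is_berk_disk_def using t by blast
  moreover have "hsia A z (classical_pt A c) = A (a i - c)" if "z \<in> berk_disk A (a i) (t i)" for i z
    using hsia_classical_pt[OF that] t by blast
  ultimately show ?thesis
    using that[of "\<lambda>i. berk_disk A (a i) (t i)", OF _ lim] t far by blast
qed

end

lemma na_abs_if_nonarch:
  assumes "abs_value K" "nonarch K" shows "na_abs K"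
proof -
  have "K 1 = K 1 * K 1" "K 1 \<noteq> 0" using assms(1) unfolding abs_value_def by (metis mult_1, simp)
  then have "K 1 = 1" by (metis mult_cancel_left1)
  then show ?thesis by unfold_locales (use assms in \<open>auto simp: abs_value_def nonarch_def\<close>)
qed

lemma na_abs_if_is_Cv:
  assumes K: "abs_value K" "nonarch K" and L: "is_Cv K L \<iota>" shows "na_abs L"
proof -
  interpret K: na_abs K by (rule na_abs_if_nonarch[OF K])
  have \<iota>: "\<iota> 0 = 0" "\<iota> 1 = 1" "\<And>x y. \<iota> (x + y) = \<iota> x + \<iota> y" and "\<And>x. L (\<iota> x) = K x"
    and abs: "abs_value L" using L by (simp_all add: is_Cv_def)
  have "\<iota> (of_nat m) = of_nat m" for m by (induction m) (simp_all add: \<iota>)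
  then have "L (of_nat m) \<le> 1" for m using K.of_nat_le_one \<open>\<And>x. L (\<iota> x) = K x\<close> by metis
  then have "L (x + y) \<le> max (L x) (L y)" for x y
    using abs by (intro ultrametric_if_integers_bounded) (auto simp: abs_value_def)
  then show ?thesis using abs by (intro na_abs_if_nonarch) (simp_all add: nonarch_def)
qed

lemma fixed_point_double_root:
  fixes f :: "'a::idom poly"
  assumes fixed: "poly f p0 = p0" and critical: "poly (pderiv f) p0 = 0"
  obtains q where "f = [:p0:] + [:-p0, 1:] ^ 2 * q"
proof -
  have "poly (f - [:p0:]) p0 = 0" using fixed by simp
  then obtain q1 where q1: "f - [:p0:] = [:-p0, 1:] * q1" by (metis dvdE poly_eq_0_iff_dvd)
  have "pderiv f = pderiv (f - [:p0:])" by (simp add: pderiv_diff pderiv_pCons)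
  also have "\<dots> = [:-p0, 1:] * pderiv q1 + q1 * pderiv [:-p0, 1:]" by (simp only: q1 pderiv_mult)
  finally have "poly q1 p0 = 0" using critical by (simp add: pderiv_pCons)
  then obtain q where q: "q1 = [:-p0, 1:] * q" by (metis dvdE poly_eq_0_iff_dvd)
  have "f - [:p0:] = [:-p0, 1:] ^ 2 * q" unfolding q1 q power2_eq_square by (rule mult.assoc[symmetric])
  then have "f = [:p0:] + [:-p0, 1:] ^ 2 * q" by (metis diff_add_cancel add.commute)
  then show ?thesis by (rule that)
qed

lemma map_poly_add_hom:
  assumes "\<phi> 0 = 0" "\<And>x y. \<phi> (x + y) = \<phi> x + \<phi> y"
  shows "map_poly \<phi> (p + q) = map_poly \<phi> p + map_poly \<phi> q"
  by (rule poly_eqI) (simp add: coeff_map_poly assms)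

lemma map_poly_mult_hom:
  fixes \<phi> :: "'a::comm_ring_1 \<Rightarrow> 'b::comm_ring_1"
  assumes zero: "\<phi> 0 = 0" and add: "\<And>x y. \<phi> (x + y) = \<phi> x + \<phi> y"
    and mult: "\<And>x y. \<phi> (x * y) = \<phi> x * \<phi> y"
  shows "map_poly \<phi> (p * q) = map_poly \<phi> p * map_poly \<phi> q"
proof (induction p)
  case (pCons a p)
  have "map_poly \<phi> (pCons a p * q) = map_poly \<phi> (smult a q) + map_poly \<phi> (pCons 0 (p * q))"
    by (simp add: mult_pCons_left map_poly_add_hom[OF zero add])
  also have "\<dots> = smult (\<phi> a) (map_poly \<phi> q) + pCons 0 (map_poly \<phi> p * map_poly \<phi> q)"
    by (simp add: map_poly_smult[of \<phi>, OF zero mult] map_poly_pCons[of \<phi>, OF zero] pCons.IH zero)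
  also have "\<dots> = map_poly \<phi> (pCons a p) * map_poly \<phi> q"
    by (simp add: mult_pCons_left map_poly_pCons[of \<phi>, OF zero])
  finally show ?case .
qed simp

lemma poly_map_poly_hom:
  assumes zero: "\<phi> 0 = 0" and "\<And>x y. \<phi> (x + y) = \<phi> x + \<phi> y" "\<And>x y. \<phi> (x * y) = \<phi> x * \<phi> y"
  shows "poly (map_poly \<phi> p) (\<phi> a) = \<phi> (poly p a)"
  by (induction p) (simp_all add: map_poly_pCons[of \<phi>, OF zero] assms)

lemma superattracting_if_is_Cv:
  assumes K: "abs_value K" "nonarch K" and Cv: "is_Cv K L \<iota>"
    and f: "2 \<le> degree f" "poly f p0 = p0" "poly (pderiv f) p0 = 0"
  shows "superattracting L (map_poly \<iota> f) (\<iota> p0)"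
proof -
  have \<iota>: "\<iota> 0 = 0" "\<iota> 1 = 1" "\<And>x y. \<iota> (x + y) = \<iota> x + \<iota> y" "\<And>x y. \<iota> (x * y) = \<iota> x * \<iota> y"
    "\<And>x. L (\<iota> x) = K x" using Cv by (simp_all add: is_Cv_def)
  have L: "na_abs L" using K Cv by (rule na_abs_if_is_Cv)
  have \<iota>_inj: "\<iota> x \<noteq> 0" if "x \<noteq> 0" for x
    using \<iota>(5)[of x] that K(1) na_abs.eq_0_iff[OF L] by (metis abs_value_def)
  obtain q where fq: "f = [:p0:] + [:-p0, 1:] ^ 2 * q" using fixed_point_double_root f(2,3) by blast
  have "\<iota> (- p0) = - \<iota> p0" using \<iota>(1) \<iota>(3)[of p0 "- p0"] by (simp add: eq_neg_iff_add_eq_0 add.commute)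
  then have "map_poly \<iota> [:-p0, 1:] = [:- \<iota> p0, 1:]" "map_poly \<iota> [:p0:] = [:\<iota> p0:]"
    by (simp_all add: map_poly_pCons \<iota>)
  then have "map_poly \<iota> f = [:\<iota> p0:] + [:- \<iota> p0, 1:] ^ 2 * map_poly \<iota> q"
    unfolding fq power2_eq_square
    by (simp only: map_poly_add_hom[of \<iota>, OF \<iota>(1,3)] map_poly_mult_hom[of \<iota>, OF \<iota>(1,3,4)])
  then have "[:- \<iota> p0, 1:] ^ 2 dvd map_poly \<iota> f - [:\<iota> p0:]" by simp
  moreover have "poly (map_poly \<iota> f) (\<iota> p0) = \<iota> p0"
    using poly_map_poly_hom[of \<iota> f p0] \<iota> f(2) by simp
  moreover have "degree (map_poly \<iota> f) = degree f" by (rule degree_map_poly) (use \<iota>_inj in auto)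
  ultimately show ?thesis
    using Cv f(1)
    by (intro superattracting.intro[OF L] superattracting_axioms.intro) (auto simp: is_Cv_def)
qed

theorem mainTheorem5:
  fixes M :: "'i set" and absv :: "'i \<Rightarrow> 'a::field \<Rightarrow> real" and nv :: "'i \<Rightarrow> real"
    and v :: 'i and f :: "'a poly" and p0 :: 'a
    and absL :: "'b::field \<Rightarrow> real" and \<iota> :: "'a \<Rightarrow> 'b"
  assumes "product_formula_field M absv nv"
    and "v \<in> M" and "nonarch (absv v)"
    and "is_Cv (absv v) absL \<iota>"
    and "degree f \<ge> 3"
    and "poly f p0 = p0" and "poly (pderiv f) p0 = 0"
    and "\<not> is_berk_disk absL (filled_julia absL (map_poly \<iota> f))"
  shows "let Kv = filled_julia absL (map_poly \<iota> f);
             r = Sup {s. s > 0 \<and> berk_disk absL (\<iota> p0) s \<subseteq> Kv}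
         in 0 < r \<and>
            (\<exists>B :: nat \<Rightarrow> ('b poly \<Rightarrow> real) set. \<exists>rs :: nat \<Rightarrow> real.
               (\<forall>i. is_berk_disk absL (B i) \<and> B i \<subseteq> Kv \<and> rs i > r \<and>
                    (\<forall>z\<in>B i. hsia absL z (classical_pt absL (\<iota> p0)) = rs i))
               \<and> rs \<longlonglongrightarrow> r)"
proof -
  have "abs_value (absv v)" using assms(1,2) by (simp add: product_formula_field_def)
  then interpret superattracting absL "map_poly \<iota> f" "\<iota> p0"
    using assms(3-7) by (intro superattracting_if_is_Cv) simp_all
  obtain B rs where "\<And>i. is_berk_disk absL (B i) \<and> B i \<subseteq> Kv \<and> r < rs i \<and>
      (\<forall>z\<in>B i. hsia absL z (classical_pt absL (\<iota> p0)) = rs i)" "rs \<longlonglongrightarrow> r"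
    using disks_in_Kv_accumulating assms(8) unfolding Kv_def by blast
  then show ?thesis using Sup_disk_radii_Kv r_pos by (auto simp: Let_def Kv_def)
qed

end
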